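(* Let $k\ge2$, let $f:(k+1)^V\to\mathbb R_{\ge0}$ be a $k$-submodular function, and run Algorithm 2 with parameters $d_a\ge\frac12$ for all $a\in[k]$. Then for every part $a\in[k]$, $$\sum_{t\in T_a}\big(3w_{t,a}-\beta_a^{(t-1)}\big)+2n_a\beta_a\ \le\ Q_a\sum_{t\in S_a}w_{t,a},\qquad Q_a=2(1+d_a)\Big(1+\frac{1}{(1+d_a/n_a)^{n_a}-1}\Big).$$
   Context: Let $V$ be a finite ground set and $k\ge1$ an integer; $[k]=\{1,\dots,k\}$. $(k+1)^V$ denotes the set of $k$-tuples $\mathbf X=(X_1,\dots,X_k)$ of pairwise disjoint subsets of $V$; $\mathrm{supp}(\mathbf X)=X_1\cup\dots\cup X_k$; $\mathbf X\preceq\mathbf Y$ means $X_a\subseteq Y_a$ for all $a$; $(\mathbf X\sqcap\mathbf Y)_a=X_a\cap Y_a$ and $(\mathbf X\sqcup\mathbf Y)_a=(X_a\cup Y_a)\setminus\bigcup_{b\neq a}(X_b\cup Y_b)$. A function $f:(k+1)^V\to\mathbb R_{\ge0}$ is $k$-submodular if $f(\mathbf X)+f(\mathbf Y)\ge f(\mathbf X\sqcap\mathbf Y)+f(\mathbf X\sqcup\mathbf Y)$ for all $\mathbf X,\mathbf Y\in(k+1)^V$. For $t\notin\mathrm{supp}(\mathbf X)$ and $a\in[k]$, $\Delta_{t,a}f(\mathbf X)=f(X_1,\dots,X_{a-1},X_a\cup\{t\},X_{a+1},\dots,X_k)-f(\mathbf X)$. Budgets are positive integers $n_1,\dots,n_k$.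 Algorithm 2. The elements of $V$ are labeled $1,\dots,m$ in arrival order. Given $d_a>0$, set $c_a=(1+d_a)/\big((1+d_a/n_a)^{n_a}-1\big)$ and $g_a(i)=\frac{c_a}{n_a}(1+d_a/n_a)^{i-1}$ for $i\in[n_a]$. Maintain $\mathbf S$, initially $(\emptyset,\dots,\emptyset)$, and thresholds $\beta_a=0$. For $t=1,\dots,m$: compute $w_{t,a}=\Delta_{t,a}f(\mathbf S)$ for all $a$; let $a$ be a part maximizing the modified discounted gain $w_{t,a}-\beta_a-\min_{a'\neq a}\beta_{a'}$; if this modified discounted gain is $\ge0$, then: if $|S_a|<n_a$ add $t$ to $S_a$, otherwise remove from $S_a$ an element $t'$ minimizing $w_{t',a}$ over $S_a$ and add $t$; then set $\beta_a=\sum_{i=1}^{n_a}w_a(i)g_a(i)$ where $w_a(i)$ is the $i$-th largest value in $\{w_{s,a}:s\in S_a\}$ ($0$ if $i>|S_a|$). Weights are never recomputed. Otherwise $t$ is discarded. Output the final $\mathbf S$. Notation: $\mathbf S^{(t)}$ and $\beta_a^{(t)}$ denote the values after processing element $t$ (with $\mathbf S^{(0)}$ empty and $\beta_a^{(0)}=0$), so $w_{t,a}=\Delta_{t,a}f(\mathbf S^{(t-1)})$; $\mathbf S$, $\beta_a$ without superscript are final values; $T_a=\bigcup_t S_a^{(t)}$ is the set of elements ever placed in part $a$. *)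

theory Defs
  imports Complex_Main "HOL-Library.Multiset"
begin

text \<open>A k-tuple of pairwise disjoint subsets of V, represented as a function from part
indices to sets; parts are indexed by 1..k and all other indices map to the empty set.\<close>

definition ktuple :: "nat \<Rightarrow> nat set \<Rightarrow> (nat \<Rightarrow> nat set) \<Rightarrow> bool" where
  "ktuple k V X \<longleftrightarrow> (\<forall>a. a \<notin> {1..k} \<longrightarrow> X a = {}) \<and> (\<forall>a\<in>{1..k}. X a \<subseteq> V)
     \<and> (\<forall>a\<in>{1..k}. \<forall>b\<in>{1..k}. a \<noteq> b \<longrightarrow> X a \<inter> X b = {})"

definition kmeet :: "(nat \<Rightarrow> nat set) \<Rightarrow> (nat \<Rightarrow> nat set) \<Rightarrow> (nat \<Rightarrow> nat set)" where
  "kmeet X Y = (\<lambda>a. X a \<inter> Y a)"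

definition kjoin :: "nat \<Rightarrow> (nat \<Rightarrow> nat set) \<Rightarrow> (nat \<Rightarrow> nat set) \<Rightarrow> (nat \<Rightarrow> nat set)" where
  "kjoin k X Y = (\<lambda>a. (X a \<union> Y a) - (\<Union>b\<in>{1..k} - {a}. X b \<union> Y b))"

definition k_submodular :: "nat \<Rightarrow> nat set \<Rightarrow> ((nat \<Rightarrow> nat set) \<Rightarrow> real) \<Rightarrow> bool" where
  "k_submodular k V f \<longleftrightarrow> (\<forall>X Y. ktuple k V X \<longrightarrow> ktuple k V Y \<longrightarrow>
       f X + f Y \<ge> f (kmeet X Y) + f (kjoin k X Y))"

definition nonneg_on_tuples :: "nat \<Rightarrow> nat set \<Rightarrow> ((nat \<Rightarrow> nat set) \<Rightarrow> real) \<Rightarrow> bool" where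
  "nonneg_on_tuples k V f \<longleftrightarrow> (\<forall>X. ktuple k V X \<longrightarrow> f X \<ge> 0)"

definition marg :: "((nat \<Rightarrow> nat set) \<Rightarrow> real) \<Rightarrow> (nat \<Rightarrow> nat set) \<Rightarrow> nat \<Rightarrow> nat \<Rightarrow> real" where
  "marg f X t a = f (X(a := insert t (X a))) - f X"

definition cpar :: "real \<Rightarrow> nat \<Rightarrow> real" where
  "cpar d n = (1 + d) / ((1 + d / real n) ^ n - 1)"

definition gpar :: "real \<Rightarrow> nat \<Rightarrow> nat \<Rightarrow> real" where
  "gpar d n i = cpar d n / real n * (1 + d / real n) ^ (i - 1)"

definition ith_largest :: "real multiset \<Rightarrow> nat \<Rightarrow> real" where
  "ith_largest M i = (let L = rev (sorted_list_of_multiset M) in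
     if 1 \<le> i \<and> i \<le> length L then L ! (i - 1) else 0)"

definition threshold :: "(nat \<Rightarrow> real) \<Rightarrow> nat set \<Rightarrow> real \<Rightarrow> nat \<Rightarrow> real" where
  "threshold w A d n = (\<Sum>i=1..n. ith_largest (image_mset w (mset_set A)) i * gpar d n i)"

definition wt :: "((nat \<Rightarrow> nat set) \<Rightarrow> real) \<Rightarrow> (nat \<Rightarrow> nat \<Rightarrow> nat set) \<Rightarrow> nat \<Rightarrow> nat \<Rightarrow> real" where
  "wt f S t a = marg f (S (t - 1)) t a"

definition mgain :: "nat \<Rightarrow> ((nat \<Rightarrow> nat set) \<Rightarrow> real) \<Rightarrow> (nat \<Rightarrow> nat \<Rightarrow> nat set)
    \<Rightarrow> (nat \<Rightarrow> nat \<Rightarrow> real) \<Rightarrow> nat \<Rightarrow> nat \<Rightarrow> real" where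
  "mgain k f S beta t a = wt f S t a - beta (t - 1) a - Min ((\<lambda>b. beta (t - 1) b) ` ({1..k} - {a}))"

text \<open>A run of Algorithm 2 on elements 1..m (arrival order), with arbitrary tie-breaking.
  S t a = S_a^{(t)}, beta t a = beta_a^{(t)}.\<close>
definition alg2_run :: "nat \<Rightarrow> ((nat \<Rightarrow> nat set) \<Rightarrow> real) \<Rightarrow> (nat \<Rightarrow> nat) \<Rightarrow> (nat \<Rightarrow> real) \<Rightarrow> nat
    \<Rightarrow> (nat \<Rightarrow> nat \<Rightarrow> nat set) \<Rightarrow> (nat \<Rightarrow> nat \<Rightarrow> real) \<Rightarrow> bool" where
  "alg2_run k f n d m S beta \<longleftrightarrow>
     (\<forall>a. S 0 a = {} \<and> beta 0 a = 0) \<and>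
     (\<forall>t\<in>{1..m}.
        ((\<exists>a\<in>{1..k}. mgain k f S beta t a \<ge> 0 \<and>
            (\<forall>b\<in>{1..k}. mgain k f S beta t b \<le> mgain k f S beta t a) \<and>
            (if card (S (t - 1) a) < n a then S t a = insert t (S (t - 1) a)
             else (\<exists>t'\<in>S (t - 1) a. (\<forall>s\<in>S (t - 1) a. wt f S t' a \<le> wt f S s a) \<and>
                     S t a = insert t (S (t - 1) a - {t'}))) \<and>
            beta t a = threshold (\<lambda>s. wt f S s a) (S t a) (d a) (n a) \<and>
            (\<forall>b. b \<noteq> a \<longrightarrow> S t b = S (t - 1) b \<and> beta t b = beta (t - 1) b))
        \<or>
        ((\<forall>a\<in>{1..k}. mgain k f S beta t a < 0) \<and>
            (\<forall>b. S t b = S (t - 1) b \<and> beta t b = beta (t - 1) b))))"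

end

theory Submission
  imports Defs
begin

text \<open>
Only part a matters. When an element of weight x enters part a, acceptance forces x >= beta_a,
because the other thresholds are nonnegative; and the weights of S_a, sorted decreasingly and
padded with zeros to length n_a, change by inserting x and dropping the last entry z. The
coefficients g_a(i) form a geometric progression with ratio r = 1 + d_a/n_a, so every entry
behind x moves one slot up and n_a times the change of beta_a collapses to an expression in
which the displaced entries carry the factor n_a (r - 1) = d_a. Together with x >= beta_a and
d_a >= 1/2 this gives 3 x - beta_a + 2 n_a (change of beta_a) <= Q_a (x - z), and x - z is
the change of the sum of the weights in S_a; summing over the run gives the claim.
\<close>

fun weighted_sum :: "(nat \<Rightarrow> real) \<Rightarrow> nat \<Rightarrow> real list \<Rightarrow> real" where
  "weighted_sum h k [] = 0"
| "weighted_sum h k (y # ys) = y * h k + weighted_sum h (Suc k) ys"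

lemma weighted_sum_append:
  "weighted_sum h k (xs @ ys) = weighted_sum h k xs + weighted_sum h (k + length xs) ys"
  by (induction xs arbitrary: k) auto

lemma weighted_sum_Suc_geometric:
  assumes "\<And>i. h (Suc i) = r * h i"
  shows "weighted_sum h (Suc k) ys = r * weighted_sum h k ys"
  by (induction ys arbitrary: k) (auto simp: assms algebra_simps)

lemma weighted_sum_conv_sum: "weighted_sum h k xs = (\<Sum>i<length xs. xs ! i * h (k + i))"
  by (induction xs arbitrary: k) (simp_all add: sum.lessThan_Suc_shift del: sum.lessThan_Suc)

lemma weighted_sum_lower_bound:
  assumes "\<forall>y\<in>set xs. x \<le> y" and "\<And>i. h i \<ge> 0"
  shows "x * (\<Sum>i<length xs. h (k + i)) \<le> weighted_sum h k xs"
  using assms(1)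
proof (induction xs arbitrary: k)
  case Nil
  then show ?case by simp
next
  case (Cons y ys)
  have "x * h k \<le> y * h k"
    using Cons.prems assms(2) by (simp add: mult_right_mono)
  moreover have "x * (\<Sum>i<length ys. h (Suc k + i)) \<le> weighted_sum h (Suc k) ys"
    using Cons.IH[of "Suc k"] Cons.prems by simp
  ultimately show ?case
    by (simp add: sum.lessThan_Suc_shift distrib_left del: sum.lessThan_Suc)
qed

lemma sorted_desc_last_le:
  fixes P :: "real list"
  shows "sorted_wrt (\<ge>) P \<Longrightarrow> y \<in> set P \<Longrightarrow> last P \<le> y"
  by (induction P) (auto simp: last_in_set)

lemma last_le_weighted_sum:
  fixes P :: "real list"
  assumes "sorted_wrt (\<ge>) P" "last P \<ge> 0" "\<And>i. h i \<ge> 0"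
    and "(\<Sum>i<length P. h (k + i)) \<ge> 1"
  shows "last P \<le> weighted_sum h k P"
proof -
  have "\<forall>y\<in>set P. last P \<le> y"
    using sorted_desc_last_le[OF assms(1)] by blast
  then have "last P * (\<Sum>i<length P. h (k + i)) \<le> weighted_sum h k P"
    using assms(3) by (rule weighted_sum_lower_bound)
  moreover have "last P \<le> last P * (\<Sum>i<length P. h (k + i))"
    using assms(2,4) mult_left_mono[of 1 _ "last P"] by simp
  ultimately show ?thesis by linarith
qed

definition gpar_ratio :: "real \<Rightarrow> nat \<Rightarrow> real" where
  "gpar_ratio d n = 1 + d / real n"

lemma gpar_Suc: "gpar d n (Suc i) = cpar d n / real n * gpar_ratio d n ^ i"
  by (simp add: gpar_def gpar_ratio_def)

lemma gpar_ratio_gt_1: "n > 0 \<Longrightarrow> d > 0 \<Longrightarrow> gpar_ratio d n > 1"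
  by (simp add: gpar_ratio_def)

lemma gpar_ratio_power_gt_1: "n > 0 \<Longrightarrow> d > 0 \<Longrightarrow> gpar_ratio d n ^ n > 1"
  using gpar_ratio_gt_1 by (simp add: one_less_power)

lemma cpar_mult_eq: "n > 0 \<Longrightarrow> d > 0 \<Longrightarrow> cpar d n * (gpar_ratio d n ^ n - 1) = 1 + d"
  using gpar_ratio_power_gt_1[of n d] by (simp add: cpar_def gpar_ratio_def[symmetric])

lemma gpar_Suc_pos: "n > 0 \<Longrightarrow> d > 0 \<Longrightarrow> gpar d n (Suc i) > 0"
  using gpar_ratio_power_gt_1[of n d] gpar_ratio_gt_1[of n d]
  by (simp add: gpar_Suc cpar_def gpar_ratio_def[symmetric])

lemma sum_gpar:
  assumes "n > 0" "d > 0"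
  shows "d * (\<Sum>i<j. gpar d n (Suc i)) = cpar d n * (gpar_ratio d n ^ j - 1)"
proof -
  let ?r = "gpar_ratio d n"
  have d_eq: "d = real n * (?r - 1)"
    using assms(1) by (simp add: gpar_ratio_def)
  have "d * (\<Sum>i<j. gpar d n (Suc i)) = cpar d n / real n * d * (\<Sum>i<j. ?r ^ i)"
    by (simp add: gpar_Suc sum_distrib_left sum_divide_distrib mult_ac)
  also have "\<dots> = cpar d n * ((\<Sum>i<j. ?r ^ i) * (?r - 1))"
    using assms(1) by (subst d_eq) simp
  also have "(\<Sum>i<j. ?r ^ i) * (?r - 1) = ?r ^ j - 1"
    by (induction j) (simp_all add: algebra_simps)
  finally show ?thesis .
qed

lemma sum_gpar_ge_1:
  assumes "n > 0" "d > 0"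
  shows "(\<Sum>i<n. gpar d n (Suc i)) \<ge> 1"
proof -
  have "d * (\<Sum>i<n. gpar d n (Suc i)) = 1 + d"
    using sum_gpar[OF assms, of n] cpar_mult_eq[OF assms] by simp
  then have "d * 1 \<le> d * (\<Sum>i<n. gpar d n (Suc i))" by simp
  then show ?thesis
    using assms(2) by (simp only: mult_le_cancel_left_pos)
qed

lemma Q_eq_cpar:
  assumes "n > 0" "d > 0"
  shows "2 * (1 + d) * (1 + 1 / (gpar_ratio d n ^ n - 1)) = 2 * cpar d n * gpar_ratio d n ^ n"
  using gpar_ratio_power_gt_1[OF assms]
  by (simp add: cpar_def gpar_ratio_def field_simps)

lemma insertion_bound:
  fixes A B :: "real list"
  assumes n: "n > 0" and d: "d \<ge> 1/2" and len: "length A + length B = n"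
    and B: "B \<noteq> []" and A_ge: "\<forall>y\<in>set A. x \<le> y"
    and x_ge: "weighted_sum h 0 (A @ B) \<le> x"
    and h: "h = (\<lambda>i. gpar d n (Suc i))"
  shows "3 * x - weighted_sum h 0 (A @ B)
           + 2 * real n * (weighted_sum h 0 (A @ x # butlast B) - weighted_sum h 0 (A @ B))
         \<le> 2 * (1 + d) * (1 + 1 / (gpar_ratio d n ^ n - 1)) * (x - last B)"
proof -
  have d0: "d > 0" using d by simp
  define r where "r = gpar_ratio d n"
  define c where "c = cpar d n"
  obtain B0 z where B_eq: "B = B0 @ [z]" using B by (metis rev_exhaust)
  define j where "j = length A"
  have n_eq: "n = Suc (j + length B0)" using len B_eq by (simp add: j_def)
  have h_Suc: "\<And>i. h (Suc i) = r * h i" and h_eq: "\<And>i. h i = c / real n * r ^ i"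
    by (simp_all add: h gpar_Suc r_def c_def)
  define SA where "SA = weighted_sum h 0 A"
  define SB where "SB = weighted_sum h j B0"
  define H where "H = h (n - 1)"
  have old: "weighted_sum h 0 (A @ B) = SA + SB + z * H"
    by (simp add: B_eq weighted_sum_append SA_def SB_def H_def j_def n_eq)
  have new: "weighted_sum h 0 (A @ x # butlast B) = SA + x * h j + r * SB"
    by (simp add: B_eq weighted_sum_append SA_def SB_def j_def
        weighted_sum_Suc_geometric[where h = h and r = r, OF h_Suc])
  have diff: "2 * real n * (SA + x * h j + r * SB - (SA + SB + z * H))
      = 2 * c * r ^ j * x + 2 * d * SB + 2 * d * z * H - 2 * c * r ^ n * z"
  proof -
    have "2 * real n * (SA + x * h j + r * SB - (SA + SB + z * H))
        = 2 * (real n * h j) * x + 2 * (real n * (r - 1)) * SB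
          + 2 * (real n * (r - 1)) * (z * H) - 2 * (real n * H * r) * z"
      by (simp add: algebra_simps)
    moreover have "real n * h j = c * r ^ j" "real n * (r - 1) = d" "real n * H * r = c * r ^ n"
      using n by (simp_all add: h_eq H_def r_def gpar_ratio_def n_eq)
    ultimately show ?thesis by (simp only:)
  qed
  have SA_bound: "2 * c * (r ^ j - 1) * x \<le> 2 * d * SA"
  proof -
    have "x * (\<Sum>i<j. h i) \<le> SA"
      using weighted_sum_lower_bound[OF A_ge, of h 0] gpar_Suc_pos[OF n d0]
      by (simp add: SA_def j_def h less_imp_le)
    then have "d * (x * (\<Sum>i<j. h i)) \<le> d * SA"
      using d0 by (simp add: mult_left_mono)
    moreover have "d * (x * (\<Sum>i<j. h i)) = c * (r ^ j - 1) * x"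
      using sum_gpar[OF n d0, of j] by (simp add: h c_def r_def)
    ultimately show ?thesis by simp
  qed
  have tail_bound: "(2 * d - 1) * (SB + z * H) \<le> (2 * d - 1) * (x - SA)"
    using x_ge old d by (intro mult_left_mono) auto
  have "3 * x - (SA + SB + z * H) + 2 * real n * (SA + x * h j + r * SB - (SA + SB + z * H))
      = 3 * x - SA + (2 * d - 1) * (SB + z * H) + 2 * c * r ^ j * x - 2 * c * r ^ n * z"
    unfolding diff by (simp add: algebra_simps)
  also have "\<dots> \<le> 3 * x - SA + (2 * d - 1) * (x - SA) + 2 * c * r ^ j * x - 2 * c * r ^ n * z"
    using tail_bound by simp
  also have "\<dots> = 2 * (1 + d) * x + 2 * c * (r ^ j - 1) * x - 2 * d * SA + 2 * c * x
      - 2 * c * r ^ n * z"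
    by (simp add: algebra_simps)
  also have "\<dots> \<le> 2 * (1 + d + c) * x - 2 * c * r ^ n * z"
    using SA_bound by (simp add: algebra_simps)
  also have "\<dots> = 2 * c * r ^ n * (x - z)"
  proof -
    have "1 + d + c = c * r ^ n"
      using cpar_mult_eq[OF n d0] by (simp add: c_def r_def algebra_simps)
    then show ?thesis by (simp only:) (simp add: algebra_simps)
  qed
  also have "\<dots> = 2 * (1 + d) * (1 + 1 / (gpar_ratio d n ^ n - 1)) * (x - last B)"
    using Q_eq_cpar[OF n d0] B_eq by (simp add: c_def r_def)
  finally show ?thesis
    unfolding old new .
qed

lemma sorted_desc_eq_if_mset_eq:
  fixes P P' :: "real list"
  assumes "sorted_wrt (\<ge>) P" "sorted_wrt (\<ge>) P'" "mset P = mset P'"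
  shows "P = P'"
proof -
  have "sort (rev P) = rev P" "sort (rev P) = rev P'"
    using assms by (auto intro!: properties_for_sort simp: sorted_wrt_rev)
  then show ?thesis by simp
qed

lemma sorted_desc_split_at:
  fixes P :: "real list"
  assumes sorted: "sorted_wrt (\<ge>) P" and "P \<noteq> []" and "last P \<le> x"
  obtains A B where "P = A @ B" "B \<noteq> []" "\<forall>y\<in>set A. x \<le> y"
    "sorted_wrt (\<ge>) (A @ x # butlast B)"
proof -
  define A where "A = takeWhile (\<lambda>y. x < y) P"
  define B where "B = dropWhile (\<lambda>y. x < y) P"
  have P_eq: "P = A @ B" by (simp add: A_def B_def)
  have A_gt: "\<forall>y\<in>set A. x < y" by (auto simp: A_def dest: set_takeWhileD)
  have B_ne: "B \<noteq> []"
    using assms(2,3) A_gt P_eq by (metis append.right_neutral last_in_set not_less)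
  have "\<forall>y\<in>set B. y \<le> x"
  proof -
    obtain b bs where "B = b # bs" using B_ne by (cases B) auto
    moreover have "\<not> x < hd B" using hd_dropWhile B_ne by (simp add: B_def)
    ultimately show ?thesis
      using sorted P_eq by (auto simp: sorted_wrt_append)
  qed
  moreover have "sorted_wrt (\<ge>) (butlast B)"
  proof -
    have "sorted_wrt (\<ge>) B" using sorted P_eq by (simp add: sorted_wrt_append)
    then show ?thesis
      using append_butlast_last_id[OF B_ne] by (metis sorted_wrt_append)
  qed
  ultimately have "sorted_wrt (\<ge>) (A @ x # butlast B)"
    using sorted P_eq A_gt
    by (auto simp: sorted_wrt_append dest: in_set_butlastD)
  then show ?thesis
    using that P_eq B_ne A_gt less_imp_le by blast
qed

definition desc_pad :: "nat \<Rightarrow> real multiset \<Rightarrow> real list" where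
  "desc_pad n M = rev (sorted_list_of_multiset M) @ replicate (n - size M) 0"

lemma length_desc_pad: "size M \<le> n \<Longrightarrow> length (desc_pad n M) = n"
  by (simp add: desc_pad_def flip: size_mset)

lemma mset_desc_pad: "mset (desc_pad n M) = M + replicate_mset (n - size M) 0"
  by (simp add: desc_pad_def)

lemma sorted_desc_pad:
  assumes "\<forall>y\<in>#M. 0 \<le> y"
  shows "sorted_wrt (\<ge>) (desc_pad n M)"
proof -
  have "sorted_wrt (\<ge>) (replicate k (0::real))" for k
    by (induction k) auto
  then show ?thesis
    using assms by (auto simp: desc_pad_def sorted_wrt_append sorted_wrt_rev)
qed

lemma threshold_eq_weighted_sum:
  assumes "card A \<le> n"
  shows "threshold w A d n
    = weighted_sum (\<lambda>i. gpar d n (Suc i)) 0 (desc_pad n (image_mset w (mset_set A)))"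
proof -
  let ?M = "image_mset w (mset_set A)"
  have len: "length (sorted_list_of_multiset ?M) = card A"
    by (metis mset_sorted_list_of_multiset size_image_mset size_mset size_mset_set)
  have "threshold w A d n = (\<Sum>i<n. ith_largest ?M (Suc i) * gpar d n (Suc i))"
    unfolding threshold_def by (simp add: sum.atLeast1_atMost_eq)
  also have "\<dots> = (\<Sum>i<n. desc_pad n ?M ! i * gpar d n (Suc i))"
    using assms len by (intro sum.cong) (auto simp: ith_largest_def desc_pad_def nth_append)
  finally show ?thesis
    using assms by (simp add: weighted_sum_conv_sum length_desc_pad)
qed

lemma sum_list_desc_pad: "sum_list (desc_pad n (image_mset w (mset_set A))) = sum w A"
  by (simp add: sum_unfold_sum_mset mset_desc_pad flip: sum_mset_sum_list)

definition part_update :: "nat \<Rightarrow> (nat \<Rightarrow> real) \<Rightarrow> nat set \<Rightarrow> nat \<Rightarrow> nat set \<Rightarrow> bool" where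
  "part_update n w A t A' \<longleftrightarrow>
     (if card A < n then A' = insert t A
      else \<exists>t'\<in>A. (\<forall>s\<in>A. w t' \<le> w s) \<and> A' = insert t (A - {t'}))"

lemma part_update_subset: "part_update n w A t A' \<Longrightarrow> t \<in> A' \<and> A' \<subseteq> insert t A"
  by (auto simp: part_update_def split: if_splits)

lemma part_update_card:
  assumes "finite A" "card A \<le> n" "part_update n w A t A'"
  shows "card A' \<le> n"
proof (cases "card A < n")
  case True
  then show ?thesis
    using assms by (simp add: part_update_def card_insert_if)
next
  case False
  then obtain t' where "t' \<in> A" "A' = insert t (A - {t'})"
    using assms(3) by (auto simp: part_update_def)
  moreover have "card (A - {t'}) < n"
    using card_Diff1_less[OF assms(1) \<open>t' \<in> A\<close>] assms(2) by simp
  ultimately show ?thesis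
    by (simp add: card_insert_le_m1)
qed

lemma mset_desc_pad_part_update:
  assumes "finite A" "card A \<le> n" "t \<notin> A" "\<forall>s\<in>A. 0 \<le> w s"
    and "part_update n w A t A'"
  defines "P \<equiv> desc_pad n (image_mset w (mset_set A))"
  shows "mset (desc_pad n (image_mset w (mset_set A'))) + {#last P#} = mset P + {#w t#}"
proof (cases "card A < n")
  case True
  then have "A' = insert t A" using assms(5) by (simp add: part_update_def)
  moreover have "last P = 0"
    using True by (simp add: P_def desc_pad_def)
  ultimately show ?thesis
    using True assms(1,3) by (simp add: P_def mset_desc_pad Suc_diff_Suc[symmetric])
next
  case False
  then have full: "card A = n" using assms(2) by simp
  then obtain t' where t': "t' \<in> A" "\<forall>s\<in>A. w t' \<le> w s" "A' = insert t (A - {t'})"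
    using assms(5) by (auto simp: part_update_def)
  define M where "M = image_mset w (mset_set (A - {t'}))"
  have M_A: "image_mset w (mset_set A) = add_mset (w t') M"
    using mset_set.remove[OF assms(1) t'(1)] by (simp add: M_def)
  have M_A': "image_mset w (mset_set A') = add_mset (w t) M"
    using assms(1,3) t' by (simp add: M_def)
  have P_eq: "P = rev (sorted_list_of_multiset (image_mset w (mset_set A)))"
    using full by (simp add: P_def desc_pad_def)
  have "P \<noteq> []"
    by (simp add: P_eq M_A)
  then obtain s where "s \<in> A" "last P = w s"
    using assms(1) last_in_set[of P] by (auto simp: P_eq)
  moreover have "last P \<le> w t'"
  proof -
    have "sorted_wrt (\<ge>) P"
      unfolding P_def using assms(1,4) by (intro sorted_desc_pad) auto
    moreover have "w t' \<in> set P"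
      using t'(1) assms(1) by (simp add: P_eq)
    ultimately show ?thesis
      by (rule sorted_desc_last_le)
  qed
  ultimately have "last P = w t'"
    using t'(2) by force
  then show ?thesis
    using full by (simp add: P_def mset_desc_pad M_A M_A')
qed

lemma desc_pad_part_update:
  fixes w :: "nat \<Rightarrow> real"
  assumes A: "finite A" "card A \<le> n" "n > 0" "t \<notin> A" and w_nonneg: "\<forall>s\<in>A. 0 \<le> w s"
    and upd: "part_update n w A t A'"
    and last_le: "last (desc_pad n (image_mset w (mset_set A))) \<le> w t"
  obtains L B where "desc_pad n (image_mset w (mset_set A)) = L @ B" "B \<noteq> []"
    "\<forall>y\<in>set L. w t \<le> y" "desc_pad n (image_mset w (mset_set A')) = L @ w t # butlast B"
proof -
  define P where "P = desc_pad n (image_mset w (mset_set A))"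
  have P_sorted: "sorted_wrt (\<ge>) P"
    unfolding P_def using A(1) w_nonneg by (intro sorted_desc_pad) auto
  have P_ne: "P \<noteq> []"
    using A by (simp add: P_def flip: length_greater_0_conv add: length_desc_pad)
  obtain L B where P_eq: "P = L @ B" and B: "B \<noteq> []" and L_ge: "\<forall>y\<in>set L. w t \<le> y"
    and sorted_new: "sorted_wrt (\<ge>) (L @ w t # butlast B)"
    using sorted_desc_split_at[OF P_sorted P_ne] last_le by (metis P_def)
  have last_eq: "last P = last B" using P_eq B by simp
  have "desc_pad n (image_mset w (mset_set A')) = L @ w t # butlast B"
  proof (rule sorted_desc_eq_if_mset_eq)
    have "0 \<le> last P"
      using last_in_set[OF P_ne] A(1) w_nonneg by (auto simp: P_def desc_pad_def)
    then have "\<forall>s\<in>A'. 0 \<le> w s"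
      using part_update_subset[OF upd] w_nonneg last_le by (auto simp: P_def)
    then show "sorted_wrt (\<ge>) (desc_pad n (image_mset w (mset_set A')))"
      by (intro sorted_desc_pad) (cases "finite A'", auto)
    have "mset B = mset (butlast B) + {#last B#}"
      using append_butlast_last_id[OF B] by (metis mset_append mset.simps)
    then have "mset (L @ w t # butlast B) + {#last P#} = mset P + {#w t#}"
      by (simp add: P_eq last_eq B)
    with mset_desc_pad_part_update[OF A(1,2,4) w_nonneg upd]
    show "mset (desc_pad n (image_mset w (mset_set A'))) = mset (L @ w t # butlast B)"
      by (metis P_def add_right_cancel)
  qed (fact sorted_new)
  then show ?thesis
    using that P_eq B L_ge by (simp add: P_def)
qed

lemma threshold_update_bound:
  fixes w :: "nat \<Rightarrow> real"
  assumes n: "n > 0" and d: "d \<ge> 1/2" and A: "finite A" "card A \<le> n" "t \<notin> A"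
    and w_nonneg: "\<forall>s\<in>A. 0 \<le> w s" and w_ge: "threshold w A d n \<le> w t"
    and upd: "part_update n w A t A'"
  shows "3 * w t - threshold w A d n + 2 * real n * (threshold w A' d n - threshold w A d n)
     \<le> 2 * (1 + d) * (1 + 1 / (gpar_ratio d n ^ n - 1)) * (sum w A' - sum w A)"
proof -
  have d0: "d > 0" using d by simp
  define h where "h = (\<lambda>i. gpar d n (Suc i))"
  define P where "P = desc_pad n (image_mset w (mset_set A))"
  have thr: "threshold w A d n = weighted_sum h 0 P"
    using A by (simp add: P_def h_def threshold_eq_weighted_sum)
  have P_len: "length P = n"
    using A by (simp add: P_def length_desc_pad)
  then have P_ne: "P \<noteq> []" using n by auto
  have "last P \<le> weighted_sum h 0 P"
  proof (rule last_le_weighted_sum)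
    show "sorted_wrt (\<ge>) P"
      unfolding P_def using A(1) w_nonneg by (intro sorted_desc_pad) auto
    show "last P \<ge> 0"
      using last_in_set[OF P_ne] A(1) w_nonneg by (auto simp: P_def desc_pad_def)
    show "\<And>i. h i \<ge> 0"
      using gpar_Suc_pos[OF n d0] by (simp add: h_def less_imp_le)
    show "(\<Sum>i<length P. h (0 + i)) \<ge> 1"
      using sum_gpar_ge_1[OF n d0] by (simp add: P_len h_def)
  qed
  then obtain L B where P_eq: "P = L @ B" and B: "B \<noteq> []" and L_ge: "\<forall>y\<in>set L. w t \<le> y"
    and P'_eq: "desc_pad n (image_mset w (mset_set A')) = L @ w t # butlast B"
    using desc_pad_part_update[OF A(1,2) n A(3) w_nonneg upd] w_ge thr
    by (metis P_def order.trans)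
  have "threshold w A' d n = weighted_sum h 0 (L @ w t # butlast B)"
    using part_update_card[OF A(1,2) upd] P'_eq by (simp add: h_def threshold_eq_weighted_sum)
  moreover have "sum w A' - sum w A = w t - last B"
  proof -
    have "sum_list B = sum_list (butlast B) + last B"
      using append_butlast_last_id[OF B] by (metis add.commute sum_list.Cons sum_list.Nil
          add_0_right sum_list_append)
    then show ?thesis
      using sum_list_desc_pad[of n w A] sum_list_desc_pad[of n w A'] P'_eq
      by (simp add: P_eq[unfolded P_def])
  qed
  moreover have "3 * w t - weighted_sum h 0 P
      + 2 * real n * (weighted_sum h 0 (L @ w t # butlast B) - weighted_sum h 0 P)
      \<le> 2 * (1 + d) * (1 + 1 / (gpar_ratio d n ^ n - 1)) * (w t - last B)"
    using insertion_bound[OF n d _ B L_ge _ h_def] P_len w_ge thr by (simp add: P_eq)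
  ultimately show ?thesis
    using thr by simp
qed

lemma threshold_nonneg:
  assumes "card A \<le> n" "\<forall>s\<in>A. 0 \<le> w s" "n > 0" "d > 0"
  shows "0 \<le> threshold w A d n"
proof -
  have "\<forall>y\<in>set (desc_pad n (image_mset w (mset_set A))). 0 \<le> y"
    using assms(2) by (cases "finite A") (auto simp flip: set_mset_mset simp: mset_desc_pad)
  then show ?thesis
    using weighted_sum_lower_bound[of _ 0] gpar_Suc_pos[OF assms(3,4)] assms(1)
    by (simp add: threshold_eq_weighted_sum less_imp_le)
qed

lemma alg2_run_step_cases [consumes 4, case_names accept discard]:
  assumes run: "alg2_run k f n d m S beta" and k: "k \<ge> 2" and s: "s < m"
    and beta_nonneg: "\<forall>b\<in>{1..k}. 0 \<le> beta s b"
  obtains (accept) a where "a \<in> {1..k}" "beta s a \<le> wt f S (Suc s) a"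
      "part_update (n a) (\<lambda>t. wt f S t a) (S s a) (Suc s) (S (Suc s) a)"
      "beta (Suc s) a = threshold (\<lambda>t. wt f S t a) (S (Suc s) a) (d a) (n a)"
      "\<forall>b. b \<noteq> a \<longrightarrow> S (Suc s) b = S s b \<and> beta (Suc s) b = beta s b"
  | (discard) "\<forall>b. S (Suc s) b = S s b \<and> beta (Suc s) b = beta s b"
proof -
  have "Suc s \<in> {1..m}" using s by simp
  note step = run[unfolded alg2_run_def, THEN conjunct2, rule_format, OF this,
      unfolded diff_Suc_1 part_update_def[symmetric]]
  consider a where "a \<in> {1..k}" "mgain k f S beta (Suc s) a \<ge> 0"
      "part_update (n a) (\<lambda>t. wt f S t a) (S s a) (Suc s) (S (Suc s) a)"
      "beta (Suc s) a = threshold (\<lambda>t. wt f S t a) (S (Suc s) a) (d a) (n a)"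
      "\<forall>b. b \<noteq> a \<longrightarrow> S (Suc s) b = S s b \<and> beta (Suc s) b = beta s b"
    | "\<forall>b. S (Suc s) b = S s b \<and> beta (Suc s) b = beta s b"
    using step by blast
  then show ?thesis
  proof cases
    case (1 a)
    have "(if a = 1 then 2 else 1) \<in> {1..k} - {a}"
      using k by auto
    then have "{1..k} - {a} \<noteq> {}" by blast
    then have "0 \<le> Min ((\<lambda>b. beta s b) ` ({1..k} - {a}))"
      using beta_nonneg by (subst Min_ge_iff) auto
    then show ?thesis
      using 1 accept by (simp add: mgain_def)
  qed (fact discard)
qed

definition run_invariant :: "((nat \<Rightarrow> nat set) \<Rightarrow> real) \<Rightarrow> (nat \<Rightarrow> nat) \<Rightarrow> (nat \<Rightarrow> real)
    \<Rightarrow> (nat \<Rightarrow> nat \<Rightarrow> nat set) \<Rightarrow> (nat \<Rightarrow> nat \<Rightarrow> real) \<Rightarrow> nat \<Rightarrow> nat \<Rightarrow> bool" where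
  "run_invariant f n d S beta s b \<longleftrightarrow>
     finite (S s b) \<and> card (S s b) \<le> n b \<and> S s b \<subseteq> {1..s} \<and>
     (\<forall>t\<in>S s b. 0 \<le> wt f S t b) \<and>
     beta s b = threshold (\<lambda>t. wt f S t b) (S s b) (d b) (n b)"

lemma run_invariant_beta_nonneg:
  "run_invariant f n d S beta s b \<Longrightarrow> n b > 0 \<Longrightarrow> d b > 0 \<Longrightarrow> 0 \<le> beta s b"
  by (simp add: run_invariant_def threshold_nonneg)

lemma run_invariant_Suc_unchanged:
  assumes "run_invariant f n d S beta s b" "S (Suc s) b = S s b" "beta (Suc s) b = beta s b"
  shows "run_invariant f n d S beta (Suc s) b"
  using assms by (fastforce simp: run_invariant_def)

lemma alg2_run_invariant:
  assumes run: "alg2_run k f n d m S beta" and k: "k \<ge> 2"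
    and n: "\<forall>a\<in>{1..k}. n a > 0" and d: "\<forall>a\<in>{1..k}. d a > 0"
  shows "s \<le> m \<Longrightarrow> \<forall>b\<in>{1..k}. run_invariant f n d S beta s b"
proof (induction s)
  case 0
  then show ?case
    using run by (simp add: alg2_run_def run_invariant_def threshold_def ith_largest_def)
next
  case (Suc s)
  then have IH: "\<forall>b\<in>{1..k}. run_invariant f n d S beta s b" by simp
  have s_less: "s < m" using Suc.prems by simp
  have beta_nonneg: "\<forall>b\<in>{1..k}. 0 \<le> beta s b"
    using IH n d run_invariant_beta_nonneg by blast
  from run k s_less beta_nonneg show ?case
  proof (cases rule: alg2_run_step_cases)
    case (accept a)
    have inv_a: "run_invariant f n d S beta s a" using IH accept(1) by blast
    let ?w = "\<lambda>t. wt f S t a"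
    have "0 \<le> ?w (Suc s)"
      using accept(1,2) IH n d run_invariant_beta_nonneg by (meson order.trans)
    moreover have "S (Suc s) a \<subseteq> insert (Suc s) (S s a)"
      using part_update_subset[OF accept(3)] by blast
    moreover have "insert (Suc s) (S s a) \<subseteq> {1..Suc s}"
      using inv_a by (auto simp: run_invariant_def)
    ultimately have "run_invariant f n d S beta (Suc s) a"
      using inv_a accept(3,4) part_update_card[of "S s a" "n a" ?w "Suc s" "S (Suc s) a"]
      by (auto simp: run_invariant_def intro: finite_subset)
    then show ?thesis
      using IH accept(5) run_invariant_Suc_unchanged by metis
  next
    case discard
    then show ?thesis
      using IH run_invariant_Suc_unchanged by blast
  qed
qed

lemma alg2_run_potential_step:
  assumes run: "alg2_run k f n d m S beta" and k: "k \<ge> 2"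
    and n: "\<forall>a\<in>{1..k}. n a > 0" and d: "\<forall>a\<in>{1..k}. d a \<ge> 1/2" and a: "a \<in> {1..k}"
    and s_less: "s < m"
  defines "Q \<equiv> 2 * (1 + d a) * (1 + 1 / ((1 + d a / real (n a)) ^ (n a) - 1))"
    and "G \<equiv> \<lambda>t. 3 * wt f S t a - beta (t - 1) a"
    and "U \<equiv> \<lambda>s. \<Union>s'\<in>{0..s}. S s' a"
  shows "sum G (U (Suc s)) - sum G (U s) + 2 * real (n a) * (beta (Suc s) a - beta s a)
    \<le> Q * ((\<Sum>t\<in>S (Suc s) a. wt f S t a) - (\<Sum>t\<in>S s a. wt f S t a))"
proof -
  have d_pos: "\<forall>a\<in>{1..k}. d a > 0" using d by fastforce
  have inv: "run_invariant f n d S beta s' b" if "s' \<le> s" "b \<in> {1..k}" for s' b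
    using alg2_run_invariant[OF run k n d_pos] that s_less by simp
  have beta_nonneg: "\<forall>b\<in>{1..k}. 0 \<le> beta s b"
    using inv n d_pos run_invariant_beta_nonneg by blast
  have U_Suc: "U (Suc s) = S (Suc s) a \<union> U s"
    by (simp add: U_def atLeast0_atMost_Suc)
  have U_sub: "U s \<subseteq> {1..s}"
    using inv[OF _ a] by (fastforce simp: U_def run_invariant_def)
  have U_unchanged: "U (Suc s) = U s" if "S (Suc s) a = S s a"
    unfolding U_Suc using that by (auto simp: U_def)
  from run k s_less beta_nonneg show ?thesis
  proof (cases rule: alg2_run_step_cases)
    case (accept a')
    show ?thesis
    proof (cases "a' = a")
      case True
      note accept_a = accept[unfolded True]
      have "finite (S s a)" "card (S s a) \<le> n a" "Suc s \<notin> S s a"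
        "\<forall>t\<in>S s a. 0 \<le> wt f S t a"
        "beta s a = threshold (\<lambda>t. wt f S t a) (S s a) (d a) (n a)"
        using inv[OF order.refl a] by (auto simp: run_invariant_def)
      moreover have "n a > 0" "d a \<ge> 1/2" using n d a by auto
      ultimately have "3 * wt f S (Suc s) a - beta s a
          + 2 * real (n a) * (beta (Suc s) a - beta s a)
          \<le> Q * ((\<Sum>t\<in>S (Suc s) a. wt f S t a) - (\<Sum>t\<in>S s a. wt f S t a))"
        using threshold_update_bound[of "n a" "d a" "S s a" "Suc s" "\<lambda>t. wt f S t a"]
          accept_a(2,3,4)
        by (simp add: Q_def gpar_ratio_def)
      moreover have "U (Suc s) = insert (Suc s) (U s)"
        using part_update_subset[OF accept_a(3)] unfolding U_Suc by (auto simp: U_def)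
      moreover have "finite (U s)" "Suc s \<notin> U s"
        using U_sub finite_subset[OF U_sub] by auto
      ultimately show ?thesis
        by (simp add: G_def)
    next
      case False
      then have "S (Suc s) a = S s a" "beta (Suc s) a = beta s a"
        using accept(5) by auto
      then show ?thesis using U_unchanged by simp
    qed
  next
    case discard
    then have "S (Suc s) a = S s a" "beta (Suc s) a = beta s a" by auto
    then show ?thesis using U_unchanged by simp
  qed
qed

lemma alg2_run_potential_bound:
  assumes run: "alg2_run k f n d m S beta" and k: "k \<ge> 2"
    and n: "\<forall>a\<in>{1..k}. n a > 0" and d: "\<forall>a\<in>{1..k}. d a \<ge> 1/2" and a: "a \<in> {1..k}"
  shows "s \<le> m \<Longrightarrow> (\<Sum>t\<in>(\<Union>s'\<in>{0..s}. S s' a). 3 * wt f S t a - beta (t - 1) a)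
      + 2 * real (n a) * beta s a
    \<le> 2 * (1 + d a) * (1 + 1 / ((1 + d a / real (n a)) ^ (n a) - 1)) * (\<Sum>t\<in>S s a. wt f S t a)"
proof (induction s)
  case 0
  then show ?case
    using run by (simp add: alg2_run_def)
next
  case (Suc s)
  then show ?case
    using alg2_run_potential_step[OF run k n d a, of s] unfolding right_diff_distrib
    by linarith
qed

theorem mainTheorem9:
  fixes k m :: nat and f :: "(nat \<Rightarrow> nat set) \<Rightarrow> real"
    and n :: "nat \<Rightarrow> nat" and d :: "nat \<Rightarrow> real"
    and S :: "nat \<Rightarrow> nat \<Rightarrow> nat set" and beta :: "nat \<Rightarrow> nat \<Rightarrow> real"
  assumes "k \<ge> 2"
    and "k_submodular k {1..m} f"
    and "nonneg_on_tuples k {1..m} f"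
    and "\<forall>a\<in>{1..k}. n a > 0"
    and "\<forall>a\<in>{1..k}. d a \<ge> 1/2"
    and "alg2_run k f n d m S beta"
    and "a \<in> {1..k}"
  shows "(\<Sum>t\<in>(\<Union>s\<in>{0..m}. S s a). 3 * wt f S t a - beta (t - 1) a) + 2 * real (n a) * beta m a
         \<le> 2 * (1 + d a) * (1 + 1 / ((1 + d a / real (n a)) ^ (n a) - 1))
           * (\<Sum>t\<in>S m a. wt f S t a)"
  using alg2_run_potential_bound[OF assms(6,1,4,5,7) order.refl] .

end
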